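(* Let $C\subsetneq S^n\subset\mathbb{R}^{n+1}$ be a closed convex subset of the round unit sphere with non-empty interior. Then there is a unique point $x_0\in C$ such that $d(x_0,\partial C)=\sup_{x\in C}d(x,\partial C)$. Moreover, $\sup_{y\in C}d(y,x_0)\le\frac{\pi}{2}$.
   Context: $d$ denotes the spherical (angular) metric on $S^n$; $C$ is convex if it contains the minimal geodesic segment between any two of its points at distance $<\pi$; $\partial C$ is the topological boundary of $C$ in $S^n$. *)

theory Defs
  imports "HOL-Analysis.Analysis"
begin

text \<open>The round unit sphere S^n inside a Euclidean space 'a of dimension n+1 is
  sphere 0 1; it carries the subspace topology.\<close>

abbreviation sph_top :: "'a::euclidean_space topology" where
  "sph_top \<equiv> subtopology euclidean (sphere (0::'a) 1)"

definition sph_dist :: "'a::euclidean_space \<Rightarrow> 'a \<Rightarrow> real" where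
  "sph_dist x y = arccos (x \<bullet> y)"

text \<open>Minimal geodesic segment from x to y on the unit sphere (for sph_dist x y < pi):
  the great-circle arc t \<mapsto> cos t x + sin t u, t in [0, d(x,y)],
  where u is the unit tangent vector at x pointing towards y.\<close>
definition sph_segment :: "'a::euclidean_space \<Rightarrow> 'a \<Rightarrow> 'a set" where
  "sph_segment x y =
     (let \<theta> = sph_dist x y; u = (y - cos \<theta> *\<^sub>R x) /\<^sub>R sin \<theta>
      in {cos t *\<^sub>R x + sin t *\<^sub>R u | t. t \<in> {0..\<theta>}})"

definition sph_convex :: "'a::euclidean_space set \<Rightarrow> bool" where
  "sph_convex C \<longleftrightarrow> C \<subseteq> sphere 0 1 \<and>
     (\<forall>x\<in>C. \<forall>y\<in>C. sph_dist x y < pi \<longrightarrow> sph_segment x y \<subseteq> C)"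

definition sph_setdist :: "'a::euclidean_space \<Rightarrow> 'a set \<Rightarrow> real" where
  "sph_setdist x A = Inf (sph_dist x ` A)"

end

theory Submission
  imports Defs
begin

(* The cone K = {t x | t \<ge> 0, x \<in> C} over a spherically convex set C is a convex cone, and for a
   unit vector x the cap of angular radius \<theta> about x lies in C exactly when the Euclidean ball of
   radius sin \<theta> about x lies in K. As K is a cone, a ball of radius r in K whose centre v has
   norm less than 1 rescales to a ball of radius r / |v| > r about the unit vector v / |v|, i.e. to
   a larger cap in C. So if x0 maximises the distance to the frontier and r is the radius of the
   ball in K belonging to x0, no ball of radius r in K has a centre of norm less than 1. Convexity
   of K nevertheless produces such a ball from the one about x0: by
   shifting it towards a point y of C with y \<bullet> x0 < 0, which shows that C lies in the closed
   hemisphere about x0, or by averaging the maximal balls about two maximisers, which shows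
   uniqueness. The same shift also shows that no point of C is farther than pi/2 from the
   frontier, since otherwise 0 would be an interior point of K and C would be the whole sphere. *)

lemma norm_diff_sq_unit:
  fixes x w :: "'a::real_inner"
  assumes "norm x = 1" "norm w = 1"
  shows "(norm (w - x))\<^sup>2 = 2 - 2 * (w \<bullet> x)"
proof -
  have "(norm (w - x))\<^sup>2 = w \<bullet> w - 2 * (w \<bullet> x) + x \<bullet> x"
    by (simp add: power2_norm_eq_inner inner_diff inner_commute)
  then show ?thesis using assms by (simp add: dot_square_norm)
qed

lemma abs_inner_unit_le_1:
  fixes x w :: "'a::real_inner"
  assumes "norm x = 1" "norm w = 1"
  shows "\<bar>w \<bullet> x\<bar> \<le> 1"
  using Cauchy_Schwarz_ineq2[of w x] assms by simp

lemma unit_eq_of_inner_eq_1: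
  fixes x w :: "'a::real_inner"
  assumes "norm x = 1" "norm w = 1" "w \<bullet> x = 1"
  shows "w = x"
  using norm_diff_sq_unit[OF assms(1,2)] assms(3) by simp

lemma norm_unit_comb_sq:
  fixes x y :: "'a::real_inner"
  assumes "norm x = 1" "norm y = 1"
  shows "(norm (a *\<^sub>R x + b *\<^sub>R y))\<^sup>2 = a\<^sup>2 + 2 * a * b * (x \<bullet> y) + b\<^sup>2"
proof -
  have "(norm (a *\<^sub>R x + b *\<^sub>R y))\<^sup>2 = (a *\<^sub>R x + b *\<^sub>R y) \<bullet> (a *\<^sub>R x + b *\<^sub>R y)"
    by (rule power2_norm_eq_inner)
  also have "\<dots> = a\<^sup>2 * (x \<bullet> x) + 2 * a * b * (x \<bullet> y) + b\<^sup>2 * (y \<bullet> y)"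
    by (simp add: inner_add inner_commute power2_eq_square algebra_simps)
  finally show ?thesis using assms by (simp add: dot_square_norm)
qed

lemma norm_great_circle:
  fixes x u :: "'a::real_inner"
  assumes "norm x = 1" "norm u = 1" "x \<bullet> u = 0"
  shows "norm (cos t *\<^sub>R x + sin t *\<^sub>R u) = 1"
  using norm_unit_comb_sq[OF assms(1,2), of "cos t" "sin t"] assms(3)
  by (simp add: abs_square_eq_1)

subsection \<open>Balls in convex cones\<close>

lemma convex_cone_ball_scale:
  fixes K :: "'a::real_normed_vector set"
  assumes "convex_cone K" "ball x e \<subseteq> K" "0 < a"
  shows "ball (a *\<^sub>R x) (a * e) \<subseteq> K"
proof
  fix v assume "v \<in> ball (a *\<^sub>R x) (a * e)"
  moreover have "a *\<^sub>R x - v = a *\<^sub>R (x - v /\<^sub>R a)" using \<open>0 < a\<close> by (simp add: algebra_simps)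
  ultimately have "dist x (v /\<^sub>R a) < e"
    using \<open>0 < a\<close> by (simp add: dist_norm mult_less_cancel_left_pos)
  then have "v /\<^sub>R a \<in> K" using assms(2) by auto
  then show "v \<in> K" using convex_cone_scaleR[OF assms(1), of a "v /\<^sub>R a"] \<open>0 < a\<close> by simp
qed

lemma convex_cone_ball_add:
  fixes K :: "'a::real_normed_vector set"
  assumes "convex_cone K" "ball x e \<subseteq> K" "y \<in> K"
  shows "ball (x + y) e \<subseteq> K"
proof
  fix v assume "v \<in> ball (x + y) e"
  moreover have "dist x (v - y) = dist (x + y) v" by (simp add: dist_norm algebra_simps)
  ultimately have "v - y \<in> K" using assms(2) by auto
  from convex_cone_add[OF assms(1) this assms(3)] show "v \<in> K" by simp
qed

lemma convex_ball_midpoint: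
  fixes K :: "'a::real_normed_vector set"
  assumes "convex K" "ball x e \<subseteq> K" "ball y e \<subseteq> K"
  shows "ball (midpoint x y) e \<subseteq> K"
proof
  fix v assume "v \<in> ball (midpoint x y) e"
  moreover have "dist x (x + (v - midpoint x y)) = dist (midpoint x y) v"
    and "dist y (y + (v - midpoint x y)) = dist (midpoint x y) v"
    by (simp_all add: dist_norm norm_minus_commute)
  ultimately have "x + (v - midpoint x y) \<in> K" "y + (v - midpoint x y) \<in> K"
    using assms(2,3) by auto
  moreover have "x + y = midpoint x y + midpoint x y" by (simp add: midpoint_eq_iff[symmetric])
  then have "midpoint (x + (v - midpoint x y)) (y + (v - midpoint x y)) = v"
    by (simp add: midpoint_eq_iff algebra_simps)
  ultimately show "v \<in> K"
    using convexD[OF assms(1), of _ _ "1/2" "1/2"] by (fastforce simp: midpoint_def scaleR_add_right)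
qed

lemma convex_cone_eq_UNIV_of_ball:
  fixes K :: "'a::real_normed_vector set"
  assumes "convex_cone K" "ball v e \<subseteq> K" "norm v < e"
  shows "K = UNIV"
proof -
  define r where "r = e - norm v"
  have "0 < r" using assms(3) by (simp add: r_def)
  have small: "w \<in> K" if "norm w < r" for w
  proof -
    have "dist v w < e"
      using that norm_triangle_ineq4[of v w] by (simp add: r_def dist_norm)
    then show ?thesis using assms(2) by auto
  qed
  have "w \<in> K" for w
  proof (cases "w = 0")
    case False
    define a where "a = r / (2 * norm w)"
    have "0 < a" using \<open>0 < r\<close> False by (simp add: a_def)
    have "norm (a *\<^sub>R w) < r" using \<open>0 < r\<close> False by (simp add: a_def)
    then have "a *\<^sub>R w \<in> K" by (rule small)
    from convex_cone_scaleR[OF assms(1) _ this, of "1 / a"] show ?thesis using \<open>0 < a\<close> by simp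
  qed (use small \<open>0 < r\<close> in auto)
  then show ?thesis by auto
qed

lemma convex_cone_ball_shift:
  fixes K :: "'a::real_inner set"
  assumes "convex_cone K" "ball x e \<subseteq> K" "y \<in> K" "norm x = 1" "norm y = 1" "y \<bullet> x < 0"
  obtains v where "ball v e \<subseteq> K" "norm v < 1"
proof
  define b where "b = y \<bullet> x"
  define v where "v = x + (- b / 2) *\<^sub>R y"
  have "0 < - b / 2" using assms(6) by (simp add: b_def)
  then show "ball v e \<subseteq> K"
    unfolding v_def by (intro convex_cone_ball_add[OF assms(1,2)] convex_cone_scaleR[OF assms(1) _ assms(3)]) simp
  have "(norm v)\<^sup>2 = 1 - 3 * b\<^sup>2 / 4"
    using norm_unit_comb_sq[OF assms(4,5), of 1 "- b / 2"]
    by (simp add: v_def b_def inner_commute power2_eq_square field_simps)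
  moreover have "0 < b\<^sup>2" using assms(6) by (simp add: b_def)
  ultimately have "(norm v)\<^sup>2 < 1\<^sup>2" by simp
  then show "norm v < 1" by (rule power_less_imp_less_base) simp
qed

subsection \<open>Spherical segments\<close>

lemma sph_segment_eq_arc:
  fixes x y :: "'a::euclidean_space"
  assumes x: "norm x = 1" and y: "norm y = 1" and "x \<noteq> y" "x \<noteq> -y"
  obtains u where "norm u = 1" "x \<bullet> u = 0" "0 < sph_dist x y" "sph_dist x y < pi"
    "y = cos (sph_dist x y) *\<^sub>R x + sin (sph_dist x y) *\<^sub>R u"
    "sph_segment x y = (\<lambda>t. cos t *\<^sub>R x + sin t *\<^sub>R u) ` {0..sph_dist x y}"
proof -
  define \<theta> where "\<theta> = sph_dist x y"
  define u where "u = (y - cos \<theta> *\<^sub>R x) /\<^sub>R sin \<theta>"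
  have "\<bar>x \<bullet> y\<bar> \<le> 1" "x \<bullet> y \<noteq> 1" "x \<bullet> y \<noteq> -1"
    using abs_inner_unit_le_1[OF y x] unit_eq_of_inner_eq_1[OF y x]
      unit_eq_of_inner_eq_1[of "-y" x] assms by (auto simp: inner_commute)
  then have "-1 < x \<bullet> y" "x \<bullet> y < 1" by auto
  then have \<theta>: "0 < \<theta>" "\<theta> < pi" and cos\<theta>: "cos \<theta> = x \<bullet> y"
    unfolding \<theta>_def sph_dist_def using arccos_lt_bounded by auto
  have sin\<theta>: "0 < sin \<theta>" using \<theta> by (rule sin_gt_zero)
  have xu: "x \<bullet> u = 0" unfolding u_def using x cos\<theta> by (simp add: inner_diff_right dot_square_norm)
  have yu: "y = cos \<theta> *\<^sub>R x + sin \<theta> *\<^sub>R u" unfolding u_def using sin\<theta> by simp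
  have "(norm (y - cos \<theta> *\<^sub>R x))\<^sup>2 = (y - cos \<theta> *\<^sub>R x) \<bullet> (y - cos \<theta> *\<^sub>R x)"
    by (rule power2_norm_eq_inner)
  also have "\<dots> = y \<bullet> y - 2 * cos \<theta> * (x \<bullet> y) + (cos \<theta>)\<^sup>2 * (x \<bullet> x)"
    by (simp add: inner_diff inner_commute power2_eq_square algebra_simps)
  also have "\<dots> = (sin \<theta>)\<^sup>2"
    using x y cos\<theta> sin_squared_eq[of \<theta>] by (simp add: dot_square_norm power2_eq_square)
  finally have "norm (y - cos \<theta> *\<^sub>R x) = sin \<theta>"
    using sin\<theta> by (simp add: power2_eq_iff_nonneg)
  then have "norm u = 1" unfolding u_def using sin\<theta> by simp
  moreover have "sph_segment x y = (\<lambda>t. cos t *\<^sub>R x + sin t *\<^sub>R u) ` {0..\<theta>}"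
    unfolding sph_segment_def Let_def \<theta>_def[symmetric] u_def by auto
  ultimately show ?thesis using that xu \<theta> yu unfolding \<theta>_def by blast
qed

text \<open>Writing \<alpha> x + \<beta> y = A x + B u in the orthonormal frame of the arc, its angle t from x
  satisfies sin (\<theta> - t) = \<alpha> sin \<theta> / |\<alpha> x + \<beta> y| > 0, hence t \<le> \<theta>.\<close>

lemma sgn_pos_comb_in_sph_segment:
  fixes x y :: "'a::euclidean_space"
  assumes x: "norm x = 1" and y: "norm y = 1" and xy: "x \<noteq> y" "x \<noteq> -y"
    and "0 < \<alpha>" "0 < \<beta>"
  shows "sgn (\<alpha> *\<^sub>R x + \<beta> *\<^sub>R y) \<in> sph_segment x y"
proof -
  obtain u where u: "norm u = 1" "x \<bullet> u = 0" and \<theta>: "0 < sph_dist x y" "sph_dist x y < pi"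
    and yu: "y = cos (sph_dist x y) *\<^sub>R x + sin (sph_dist x y) *\<^sub>R u"
    and seg: "sph_segment x y = (\<lambda>t. cos t *\<^sub>R x + sin t *\<^sub>R u) ` {0..sph_dist x y}"
    using sph_segment_eq_arc[OF x y xy] .
  define \<theta> where "\<theta> = sph_dist x y"
  define A where "A = \<alpha> + \<beta> * cos \<theta>"
  define B where "B = \<beta> * sin \<theta>"
  define N where "N = norm (\<alpha> *\<^sub>R x + \<beta> *\<^sub>R y)"
  have v: "\<alpha> *\<^sub>R x + \<beta> *\<^sub>R y = A *\<^sub>R x + B *\<^sub>R u"
    by (subst yu) (simp add: A_def B_def \<theta>_def algebra_simps)
  have B: "0 < B" unfolding B_def using \<open>0 < \<beta>\<close> \<theta> by (simp add: \<theta>_def sin_gt_zero)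
  have N2: "N\<^sup>2 = A\<^sup>2 + B\<^sup>2" unfolding N_def v using norm_unit_comb_sq[OF x u(1)] u(2) by simp
  then have "0 < N\<^sup>2" using B by (simp add: add_nonneg_pos)
  then have N: "0 < N" by (simp add: N_def)
  have "(A / N)\<^sup>2 + (B / N)\<^sup>2 = 1" using N2 N B by (simp add: power_divide add_divide_distrib[symmetric])
  then have "(A / N)\<^sup>2 \<le> 1" and "1 - (A / N)\<^sup>2 = (B / N)\<^sup>2"
    using zero_le_power2[of "B / N"] by linarith+
  then have AN: "\<bar>A / N\<bar> \<le> 1" and sq: "sqrt (1 - (A / N)\<^sup>2) = B / N"
    using B N by (simp_all add: abs_square_le_1)
  define t where "t = arccos (A / N)"
  have cos_t: "cos t = A / N" and sin_t: "sin t = B / N" and t: "0 \<le> t" "t \<le> pi"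
    unfolding t_def using cos_arccos_abs[OF AN] sin_arccos_abs[OF AN] sq arccos_bounded AN
    by (auto simp del: abs_divide)
  have "sin (\<theta> - t) = \<alpha> * sin \<theta> / N"
    unfolding sin_diff cos_t sin_t A_def B_def using N by (simp add: field_simps)
  then have "0 < sin (\<theta> - t)" using \<open>0 < \<alpha>\<close> \<theta> N by (simp add: \<theta>_def sin_gt_zero)
  moreover have "sin (\<theta> - t) < 0" if "\<theta> < t"
    using sin_gt_zero[of "t - \<theta>"] that t \<theta> by (simp add: \<theta>_def sin_diff mult.commute)
  ultimately have "t \<le> \<theta>" by fastforce
  moreover have "(\<alpha> *\<^sub>R x + \<beta> *\<^sub>R y) /\<^sub>R N = cos t *\<^sub>R x + sin t *\<^sub>R u"
    unfolding v cos_t sin_t by (simp add: scaleR_add_right divide_inverse_commute)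
  ultimately show ?thesis unfolding seg N_def \<theta>_def sgn_div_norm using t by auto
qed

lemma sph_segment_connected_cap:
  fixes x y :: "'a::euclidean_space"
  assumes x: "norm x = 1" and y: "norm y = 1" and "x \<noteq> y" "x \<noteq> -y"
  shows "connected (sph_segment x y)" "x \<in> sph_segment x y" "y \<in> sph_segment x y"
    "sph_segment x y \<subseteq> {z \<in> sphere 0 1. y \<bullet> x \<le> z \<bullet> x}"
proof -
  obtain u where u: "norm u = 1" "x \<bullet> u = 0" and \<theta>: "0 < sph_dist x y" "sph_dist x y < pi"
    and yu: "y = cos (sph_dist x y) *\<^sub>R x + sin (sph_dist x y) *\<^sub>R u"
    and seg: "sph_segment x y = (\<lambda>t. cos t *\<^sub>R x + sin t *\<^sub>R u) ` {0..sph_dist x y}"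
    using sph_segment_eq_arc[OF assms] .
  show "connected (sph_segment x y)"
    unfolding seg by (intro connected_continuous_image continuous_intros) auto
  show "x \<in> sph_segment x y" using \<theta> unfolding seg by (auto intro!: image_eqI[of _ _ 0])
  show "y \<in> sph_segment x y" using \<theta> yu unfolding seg by (auto intro!: image_eqI[of _ _ "sph_dist x y"])
  have "cos (sph_dist x y) = y \<bullet> x"
    using abs_inner_unit_le_1[OF y x] by (simp add: sph_dist_def cos_arccos_abs inner_commute)
  moreover have "cos (sph_dist x y) \<le> cos t" if "t \<in> {0..sph_dist x y}" for t
    using that \<theta> by (intro cos_monotone_0_pi_le) auto
  moreover have "(cos t *\<^sub>R x + sin t *\<^sub>R u) \<bullet> x = cos t" for t
    using u(2) x by (simp add: inner_add_left inner_add_right inner_commute dot_square_norm)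
  ultimately show "sph_segment x y \<subseteq> {z \<in> sphere 0 1. y \<bullet> x \<le> z \<bullet> x}"
    unfolding seg using norm_great_circle[OF x u] by auto
qed

subsection \<open>The cone over a spherically convex set\<close>

definition sph_cone :: "'a::real_normed_vector set \<Rightarrow> 'a set" where
  "sph_cone C = {v. v = 0 \<or> sgn v \<in> C}"

lemma sph_cone_unit_iff: "norm v = 1 \<Longrightarrow> v \<in> sph_cone C \<longleftrightarrow> v \<in> C"
  unfolding sph_cone_def by (auto simp: sgn_div_norm)

lemma sph_convex_sgn_pos_comb:
  fixes p q :: "'a::euclidean_space"
  assumes "sph_convex C" "p \<in> C" "q \<in> C" "0 < \<alpha>" "0 < \<beta>" "\<alpha> *\<^sub>R p + \<beta> *\<^sub>R q \<noteq> 0"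
  shows "sgn (\<alpha> *\<^sub>R p + \<beta> *\<^sub>R q) \<in> C"
proof -
  have p: "norm p = 1" and q: "norm q = 1" using assms(1-3) by (auto simp: sph_convex_def)
  consider "p = q" | "p = -q" | "p \<noteq> q" "p \<noteq> -q" by blast
  then show ?thesis
  proof cases
    case 1
    then show ?thesis using assms p by (simp add: scaleR_add_left[symmetric] sgn_scaleR sgn_div_norm)
  next
    case 2
    then have eq: "\<alpha> *\<^sub>R p + \<beta> *\<^sub>R q = (\<alpha> - \<beta>) *\<^sub>R p" by (simp add: algebra_simps)
    then have "\<alpha> \<noteq> \<beta>" using assms(6) by auto
    have "sgn ((\<alpha> - \<beta>) *\<^sub>R p) = sgn (\<alpha> - \<beta>) *\<^sub>R p"
      using p by (simp add: sgn_scaleR sgn_div_norm[of p])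
    then have "sgn ((\<alpha> - \<beta>) *\<^sub>R p) \<in> {p, -p}"
      using \<open>\<alpha> \<noteq> \<beta>\<close> by (cases "\<alpha> < \<beta>") (auto simp: sgn_if)
    then show ?thesis using assms(2,3) 2 eq by auto
  next
    case 3
    then have "sph_dist p q < pi" using sph_segment_eq_arc[OF p q] by metis
    then have "sph_segment p q \<subseteq> C" using assms(1-3) by (auto simp: sph_convex_def)
    then show ?thesis using sgn_pos_comb_in_sph_segment[OF p q 3 assms(4,5)] by blast
  qed
qed

lemma convex_cone_sph_cone:
  fixes C :: "'a::euclidean_space set"
  assumes "sph_convex C"
  shows "convex_cone (sph_cone C)"
  unfolding convex_cone_iff
proof (intro conjI ballI allI impI)
  show "0 \<in> sph_cone C" by (simp add: sph_cone_def)
next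
  fix v and c :: real assume "v \<in> sph_cone C" "0 \<le> c"
  then show "c *\<^sub>R v \<in> sph_cone C" by (auto simp: sph_cone_def sgn_scaleR)
next
  fix v w assume v: "v \<in> sph_cone C" and w: "w \<in> sph_cone C"
  show "v + w \<in> sph_cone C"
  proof (cases "v = 0 \<or> w = 0 \<or> v + w = 0")
    case True
    then show ?thesis using v w by (auto simp: sph_cone_def)
  next
    case False
    then have "v + w = norm v *\<^sub>R sgn v + norm w *\<^sub>R sgn w" "sgn v \<in> C" "sgn w \<in> C"
      using v w by (auto simp: sph_cone_def sgn_div_norm)
    then show ?thesis
      using sph_convex_sgn_pos_comb[OF assms, of "sgn v" "sgn w" "norm v" "norm w"] False
      by (simp add: sph_cone_def)
  qed
qed

definition sph_cap :: "'a::real_inner \<Rightarrow> real \<Rightarrow> 'a set" where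
  "sph_cap x c = {w \<in> sphere 0 1. c < w \<bullet> x}"

lemma openin_sph_cap: "openin sph_top (sph_cap x c)"
proof -
  have "sph_cap x c = sphere 0 1 \<inter> {w. x \<bullet> w > c}"
    by (auto simp: sph_cap_def inner_commute)
  then show ?thesis by (simp add: openin_open_Int open_halfspace_gt)
qed

text \<open>The radius sqrt (1 - c^2) is the sine of the angular radius arccos c of the cap.\<close>

lemma ball_subset_sph_cone_if_sph_cap_subset:
  fixes x :: "'a::real_inner"
  assumes x: "norm x = 1" and c: "0 \<le> c" "c \<le> 1" and cap: "sph_cap x c \<subseteq> C"
  shows "ball x (sqrt (1 - c\<^sup>2)) \<subseteq> sph_cone C"
proof
  fix v assume "v \<in> ball x (sqrt (1 - c\<^sup>2))"
  then have "norm (v - x) < sqrt (1 - c\<^sup>2)" by (simp add: dist_norm norm_minus_commute)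
  then have "(norm (v - x))\<^sup>2 < (sqrt (1 - c\<^sup>2))\<^sup>2" by (intro power_strict_mono) auto
  also have "\<dots> = 1 - c\<^sup>2" using c by (simp add: power_le_one)
  finally have "(norm (v - x))\<^sup>2 < 1 - c\<^sup>2" .
  moreover have "(norm (v - x))\<^sup>2 = v \<bullet> v - 2 * (v \<bullet> x) + x \<bullet> x"
    by (simp add: power2_norm_eq_inner inner_diff inner_commute)
  then have "(norm (v - x))\<^sup>2 = (norm v)\<^sup>2 - 2 * (v \<bullet> x) + 1"
    using x by (simp add: dot_square_norm)
  moreover have "2 * c * norm v \<le> (norm v)\<^sup>2 + c\<^sup>2"
    using sum_squares_bound[of "norm v" c] by (simp add: power2_eq_square mult_ac)
  ultimately have "c * norm v < v \<bullet> x" by linarith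
  moreover from this have "v \<noteq> 0" by auto
  moreover have "sgn v \<bullet> x = (v \<bullet> x) / norm v" by (simp add: sgn_div_norm divide_inverse_commute)
  ultimately have "sgn v \<in> sph_cap x c" by (simp add: sph_cap_def pos_less_divide_eq norm_sgn)
  then show "v \<in> sph_cone C" using cap by (auto simp: sph_cone_def)
qed

lemma sph_cap_subset_if_ball_subset_sph_cone:
  fixes x :: "'a::real_inner"
  assumes x: "norm x = 1" and c: "0 \<le> c" "c \<le> 1" and ball: "ball x (sqrt (1 - c\<^sup>2)) \<subseteq> sph_cone C"
  shows "sph_cap x c \<subseteq> C"
proof
  fix w assume "w \<in> sph_cap x c"
  then have w: "norm w = 1" and l: "c < w \<bullet> x" by (auto simp: sph_cap_def)
  have "(norm ((w \<bullet> x) *\<^sub>R w - x))\<^sup>2 = 1 - (w \<bullet> x)\<^sup>2"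
    using norm_unit_comb_sq[OF w x, of "w \<bullet> x" "-1"] by (simp add: power2_eq_square)
  also have "\<dots> < (sqrt (1 - c\<^sup>2))\<^sup>2" using c l by (simp add: power_strict_mono power_le_one)
  finally have "norm ((w \<bullet> x) *\<^sub>R w - x) < sqrt (1 - c\<^sup>2)"
    by (rule power_less_imp_less_base) (use c in \<open>simp add: power_le_one\<close>)
  then have "(w \<bullet> x) *\<^sub>R w \<in> sph_cone C" using ball by (auto simp: dist_norm norm_minus_commute)
  moreover have "sgn ((w \<bullet> x) *\<^sub>R w) = w" using c l w by (simp add: sgn_scaleR sgn_div_norm)
  ultimately show "w \<in> C" using c l w by (auto simp: sph_cone_def)
qed

subsection \<open>Distance to the frontier\<close>

lemma infdist_unit_le_2:
  fixes x :: "'a::real_normed_vector"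
  assumes "norm x = 1" "A \<subseteq> sphere 0 1"
  shows "infdist x A \<le> 2"
proof (cases "A = {}")
  case False
  then obtain z where "z \<in> A" by blast
  then have "infdist x A \<le> dist x z" by (rule infdist_le)
  also have "\<dots> \<le> norm x + norm z" by (simp add: dist_norm norm_triangle_ineq4)
  finally show ?thesis using assms \<open>z \<in> A\<close> by auto
qed (simp add: infdist_def)

lemma sph_setdist_eq_arccos_infdist:
  fixes x :: "'a::euclidean_space"
  assumes x: "norm x = 1" and A: "A \<subseteq> sphere 0 1" "closed A" "A \<noteq> {}"
  shows "sph_setdist x A = arccos (1 - (infdist x A)\<^sup>2 / 2)"
  unfolding sph_setdist_def
proof (rule cInf_eq_minimum)
  have inner_eq: "x \<bullet> z = 1 - (dist x z)\<^sup>2 / 2" and "-1 \<le> x \<bullet> z" if "z \<in> A" for z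
  proof -
    have "norm z = 1" using that A(1) by auto
    then show "x \<bullet> z = 1 - (dist x z)\<^sup>2 / 2" "-1 \<le> x \<bullet> z"
      using norm_diff_sq_unit[OF x, of z] abs_inner_unit_le_1[OF x, of z]
      by (auto simp: dist_norm norm_minus_commute inner_commute field_simps)
  qed
  obtain z0 where z0: "z0 \<in> A" "infdist x A = dist x z0"
    using infdist_attains_inf[OF A(2,3)] by metis
  show "arccos (1 - (infdist x A)\<^sup>2 / 2) \<in> sph_dist x ` A"
    using z0 by (simp add: sph_dist_def inner_eq)
  fix y assume "y \<in> sph_dist x ` A"
  then obtain z where z: "z \<in> A" "y = arccos (x \<bullet> z)" unfolding sph_dist_def by blast
  have "(infdist x A)\<^sup>2 \<le> (dist x z)\<^sup>2"
    using infdist_le[OF z(1)] infdist_nonneg by (intro power_mono) auto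
  then show "arccos (1 - (infdist x A)\<^sup>2 / 2) \<le> y"
    unfolding z(2) using inner_eq[OF z(1)] \<open>z \<in> A \<Longrightarrow> -1 \<le> x \<bullet> z\<close> z(1)
    by (intro arccos_le_arccos) auto
qed

text \<open>For unit vectors at chordal distance r and angle \<theta>, r^2 = 2 - 2 cos \<theta>; so this is the cosine
  of the spherical distance from x to the frontier of C.\<close>

definition cos_dist_frontier :: "'a::euclidean_space set \<Rightarrow> 'a \<Rightarrow> real" where
  "cos_dist_frontier C x = 1 - (infdist x (sph_top frontier_of C))\<^sup>2 / 2"

lemma closed_sph_frontier: "closed (sph_top frontier_of C)"
  by (rule closedin_closed_trans[OF closedin_frontier_of]) simp

lemma sph_frontier_subset: "sph_top frontier_of C \<subseteq> sphere 0 1"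
  using frontier_of_subset_topspace[of sph_top C] by simp

lemma cos_dist_frontier_bounds:
  assumes "norm x = 1"
  shows "-1 \<le> cos_dist_frontier C x" "cos_dist_frontier C x \<le> 1"
proof -
  have "(infdist x (sph_top frontier_of C))\<^sup>2 \<le> 2\<^sup>2"
    using infdist_unit_le_2[OF assms sph_frontier_subset] infdist_nonneg by (intro power_mono)
  then show "-1 \<le> cos_dist_frontier C x" "cos_dist_frontier C x \<le> 1"
    by (simp_all add: cos_dist_frontier_def)
qed

lemma continuous_on_cos_dist_frontier: "continuous_on S (cos_dist_frontier C)"
  unfolding cos_dist_frontier_def by (intro continuous_intros) auto

lemma sph_cap_cos_dist_frontier_subset:
  fixes x :: "'a::euclidean_space"
  assumes "x \<in> C" "norm x = 1"
  shows "sph_cap x (cos_dist_frontier C x) \<subseteq> C"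
proof
  let ?F = "sph_top frontier_of C"
  fix w assume "w \<in> sph_cap x (cos_dist_frontier C x)"
  then have w: "norm w = 1" and wx: "cos_dist_frontier C x < w \<bullet> x" by (auto simp: sph_cap_def)
  show "w \<in> C"
  proof (rule ccontr)
    assume "w \<notin> C"
    then have "x \<noteq> w" using assms(1) by blast
    moreover have "x \<noteq> -w"
      using wx cos_dist_frontier_bounds(1)[OF assms(2), of C] assms(2) by (auto simp: dot_square_norm)
    ultimately have seg: "connected (sph_segment x w)" "x \<in> sph_segment x w" "w \<in> sph_segment x w"
      "sph_segment x w \<subseteq> {z \<in> sphere 0 1. w \<bullet> x \<le> z \<bullet> x}"
      using sph_segment_connected_cap[OF assms(2) w] by auto
    then have "connectedin sph_top (sph_segment x w)" by (auto simp: connectedin_subtopology)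
    then obtain z where "z \<in> sph_segment x w" "z \<in> ?F"
      using connectedin_Int_frontier_of[of sph_top _ C] seg(2,3) assms(1) \<open>w \<notin> C\<close> by blast
    then have z: "z \<in> ?F" "norm z = 1" "cos_dist_frontier C x < z \<bullet> x" using seg(4) wx by auto
    then have "(dist x z)\<^sup>2 < (infdist x ?F)\<^sup>2"
      using norm_diff_sq_unit[OF assms(2) z(2)]
      by (simp add: cos_dist_frontier_def dist_norm norm_minus_commute)
    then have "dist x z < infdist x ?F" using infdist_nonneg power_less_imp_less_base by blast
    then show False using infdist_le[OF z(1), of x] by simp
  qed
qed

lemma cos_dist_frontier_le_of_sph_cap_subset:
  fixes x :: "'a::euclidean_space"
  assumes "norm x = 1" "sph_top frontier_of C \<noteq> {}" "sph_cap x c \<subseteq> C"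
  shows "cos_dist_frontier C x \<le> c"
proof (rule ccontr)
  assume "\<not> cos_dist_frontier C x \<le> c"
  obtain z where z: "z \<in> sph_top frontier_of C" "infdist x (sph_top frontier_of C) = dist x z"
    using infdist_attains_inf[OF closed_sph_frontier assms(2)] by metis
  then have "norm z = 1" using sph_frontier_subset by force
  then have "z \<bullet> x = cos_dist_frontier C x"
    using norm_diff_sq_unit[OF assms(1), of z] z(2)
    by (simp add: cos_dist_frontier_def dist_norm norm_minus_commute field_simps)
  then have "z \<in> sph_cap x c" using \<open>norm z = 1\<close> \<open>\<not> cos_dist_frontier C x \<le> c\<close>
    by (simp add: sph_cap_def)
  then have "z \<in> sph_top interior_of C" using interior_of_maximal[OF assms(3) openin_sph_cap] by blast
  then show False using z(1) by (simp add: frontier_of_def)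
qed

subsection \<open>The incenter\<close>

locale proper_sph_convex =
  fixes C :: "'a::euclidean_space set"
  assumes dim: "DIM('a) \<ge> 2" and subset_sphere: "C \<subseteq> sphere 0 1"
    and ne_sphere: "C \<noteq> sphere 0 1" and convex_C: "sph_convex C"
begin

lemma unit_of_mem: "x \<in> C \<Longrightarrow> norm x = 1"
  using subset_sphere by auto

lemma convex_sph_cone: "convex_cone (sph_cone C)"
  by (rule convex_cone_sph_cone[OF convex_C])

lemma ball_subset_sph_cone_imp_le_norm:
  assumes "ball v e \<subseteq> sph_cone C"
  shows "e \<le> norm v"
proof (rule ccontr)
  assume "\<not> e \<le> norm v"
  then have "sph_cone C = UNIV" using convex_cone_eq_UNIV_of_ball[OF convex_sph_cone assms] by simp
  then have "sphere 0 1 \<subseteq> C" using sph_cone_unit_iff by fastforce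
  then show False using subset_sphere ne_sphere by blast
qed

text \<open>Otherwise the open hemisphere about x lies in C, and shifting the unit ball about x towards a
  point of C beyond the equator gives a ball in the cone containing 0.\<close>

lemma cos_dist_frontier_nonneg:
  assumes "x \<in> C"
  shows "0 \<le> cos_dist_frontier C x"
proof (rule ccontr)
  let ?k = "cos_dist_frontier C x"
  assume "\<not> 0 \<le> ?k"
  have x: "norm x = 1" using assms by (rule unit_of_mem)
  have "sph_cap x 0 \<subseteq> C"
    using sph_cap_cos_dist_frontier_subset[OF assms x] \<open>\<not> 0 \<le> ?k\<close> by (auto simp: sph_cap_def)
  then have ball: "ball x 1 \<subseteq> sph_cone C"
    using ball_subset_sph_cone_if_sph_cap_subset[OF x, of 0] by simp
  have "-x \<in> sphere 0 1" "x \<in> sphere 0 1" "x \<bullet> -x \<le> ?k / 2" "?k / 2 \<le> x \<bullet> x"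
    using cos_dist_frontier_bounds[OF x, of C] x by (auto simp: dot_square_norm)
  then obtain w where w: "w \<in> sphere 0 1" "x \<bullet> w = ?k / 2"
    using connected_ivt_hyperplane[OF connected_sphere[OF dim]] by blast
  then have "w \<in> sph_cap x ?k" using \<open>\<not> 0 \<le> ?k\<close> by (simp add: sph_cap_def inner_commute)
  then have "w \<in> sph_cone C"
    using sph_cap_cos_dist_frontier_subset[OF assms x] sph_cone_unit_iff w(1) by auto
  moreover have "w \<bullet> x < 0" using w(2) \<open>\<not> 0 \<le> ?k\<close> by (simp add: inner_commute)
  moreover have "norm w = 1" using w(1) by simp
  ultimately obtain v where "ball v 1 \<subseteq> sph_cone C" "norm v < 1"
    using convex_cone_ball_shift[OF convex_sph_cone ball _ x] by blast
  then show False using ball_subset_sph_cone_imp_le_norm by fastforce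
qed

lemma ball_subset_sph_cone:
  assumes "x \<in> C"
  shows "ball x (sqrt (1 - (cos_dist_frontier C x)\<^sup>2)) \<subseteq> sph_cone C"
  using ball_subset_sph_cone_if_sph_cap_subset[OF unit_of_mem[OF assms]
      cos_dist_frontier_nonneg[OF assms] cos_dist_frontier_bounds(2)[OF unit_of_mem[OF assms]]
      sph_cap_cos_dist_frontier_subset[OF assms unit_of_mem[OF assms]]] .

end

definition sph_incenter :: "'a::euclidean_space set \<Rightarrow> 'a \<Rightarrow> bool" where
  "sph_incenter C x0 \<longleftrightarrow> x0 \<in> C \<and> (\<forall>x\<in>C. cos_dist_frontier C x0 \<le> cos_dist_frontier C x)"

locale sph_convex_body = proper_sph_convex +
  assumes closedin_C: "closedin sph_top C" and interior_C_ne: "sph_top interior_of C \<noteq> {}"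
begin

lemma frontier_ne: "sph_top frontier_of C \<noteq> {}"
proof
  assume "sph_top frontier_of C = {}"
  then have "openin sph_top C" using closedin_C frontier_of_eq_empty[of C sph_top] subset_sphere by simp
  moreover have "connected_space (sph_top :: 'a topology)"
    using connected_sphere[OF dim] by (simp add: connected_space_subtopology)
  moreover have "C \<noteq> {}" using interior_C_ne interior_of_subset[of sph_top C] by blast
  ultimately show False using closedin_C ne_sphere unfolding connected_space_clopen_in by auto
qed

lemma sph_incenter_exists: "\<exists>x0. sph_incenter C x0"
proof -
  have "compact C"
    using closedin_closed_trans[OF closedin_C] subset_sphere
    by (meson bounded_sphere bounded_subset closed_sphere compact_eq_bounded_closed)
  moreover have "C \<noteq> {}" using interior_C_ne interior_of_subset[of sph_top C] by blast
  ultimately show ?thesis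
    using continuous_attains_inf[OF _ _ continuous_on_cos_dist_frontier] by (auto simp: sph_incenter_def)
qed

lemma cos_dist_frontier_incenter_lt_1:
  assumes "sph_incenter C x0"
  shows "cos_dist_frontier C x0 < 1"
proof -
  obtain z where z: "z \<in> sph_top interior_of C" using interior_C_ne by blast
  then have "z \<notin> sph_top frontier_of C" "z \<in> C"
    using interior_of_subset[of sph_top C] by (auto simp: frontier_of_def)
  then have "0 < infdist z (sph_top frontier_of C)"
    using infdist_pos_not_in_closed[OF closed_sph_frontier frontier_ne] by blast
  then have "cos_dist_frontier C z < 1" by (simp add: cos_dist_frontier_def)
  then show ?thesis using assms \<open>z \<in> C\<close> by (auto simp: sph_incenter_def)
qed

lemma sph_setdist_frontier:
  assumes "x \<in> C"
  shows "sph_setdist x (sph_top frontier_of C) = arccos (cos_dist_frontier C x)"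
  using sph_setdist_eq_arccos_infdist[OF unit_of_mem[OF assms] sph_frontier_subset
      closed_sph_frontier frontier_ne]
  by (simp add: cos_dist_frontier_def)

lemma sph_incenter_iff_max_sph_setdist:
  "sph_incenter C x0 \<longleftrightarrow>
     x0 \<in> C \<and> (\<forall>x\<in>C. sph_setdist x (sph_top frontier_of C) \<le> sph_setdist x0 (sph_top frontier_of C))"
proof -
  have "sph_setdist x (sph_top frontier_of C) \<le> sph_setdist x0 (sph_top frontier_of C)
      \<longleftrightarrow> cos_dist_frontier C x0 \<le> cos_dist_frontier C x" if "x0 \<in> C" "x \<in> C" for x
  proof -
    note bounds = cos_dist_frontier_bounds[OF unit_of_mem[OF that(1)]]
      cos_dist_frontier_bounds[OF unit_of_mem[OF that(2)]]
    have "arccos (cos_dist_frontier C x) \<le> arccos (cos_dist_frontier C x0)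
        \<longleftrightarrow> cos_dist_frontier C x0 \<le> cos_dist_frontier C x"
      using bounds arccos_less_arccos[of "cos_dist_frontier C x" "cos_dist_frontier C x0"]
        arccos_le_arccos[of "cos_dist_frontier C x0" "cos_dist_frontier C x"] by fastforce
    then show ?thesis by (simp add: sph_setdist_frontier that)
  qed
  then show ?thesis by (auto simp: sph_incenter_def)
qed

lemma cos_dist_frontier_sgn_le:
  assumes ball: "ball v e \<subseteq> sph_cone C" and "0 < e"
  shows "sgn v \<in> C" "cos_dist_frontier C (sgn v) \<le> sqrt (1 - (e / norm v)\<^sup>2)"
proof -
  have "e \<le> norm v" using ball by (rule ball_subset_sph_cone_imp_le_norm)
  then have "0 < norm v" using \<open>0 < e\<close> by linarith
  then have "e / norm v \<le> 1" using \<open>e \<le> norm v\<close> by simp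
  then have e': "0 < e / norm v" "e / norm v \<le> 1" "norm (sgn v) = 1"
    using \<open>0 < e\<close> \<open>0 < norm v\<close> by (simp_all add: norm_sgn)
  have "ball (sgn v) (e / norm v) \<subseteq> sph_cone C"
    using convex_cone_ball_scale[OF convex_sph_cone ball, of "1 / norm v"] \<open>0 < norm v\<close>
    by (simp add: sgn_div_norm divide_inverse_commute)
  moreover have "sgn v \<in> ball (sgn v) (e / norm v)" using e' by simp
  ultimately show "sgn v \<in> C" using sph_cone_unit_iff e'(3) by blast
  define c where "c = sqrt (1 - (e / norm v)\<^sup>2)"
  have c: "0 \<le> c" "c \<le> 1" "sqrt (1 - c\<^sup>2) = e / norm v"
    using e' \<open>0 < e\<close> by (simp_all add: c_def power_le_one)
  then have "ball (sgn v) (sqrt (1 - c\<^sup>2)) \<subseteq> sph_cone C"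
    using \<open>ball (sgn v) (e / norm v) \<subseteq> sph_cone C\<close> by simp
  then have "sph_cap (sgn v) c \<subseteq> C" by (rule sph_cap_subset_if_ball_subset_sph_cone[OF e'(3) c(1,2)])
  then show "cos_dist_frontier C (sgn v) \<le> sqrt (1 - (e / norm v)\<^sup>2)"
    unfolding c_def[symmetric]
    by (rule cos_dist_frontier_le_of_sph_cap_subset[OF e'(3) frontier_ne])
qed

text \<open>Rescaling v to the unit vector sgn v would give a cap in C larger than the one about x0.\<close>

lemma sph_incenter_no_short_ball:
  assumes x0: "sph_incenter C x0"
    and ball: "ball v (sqrt (1 - (cos_dist_frontier C x0)\<^sup>2)) \<subseteq> sph_cone C"
  shows "1 \<le> norm v"
proof (rule ccontr)
  assume "\<not> 1 \<le> norm v"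
  define k0 where "k0 = cos_dist_frontier C x0"
  define e0 where "e0 = sqrt (1 - k0\<^sup>2)"
  have k0: "0 \<le> k0" "k0 < 1"
    using x0 cos_dist_frontier_nonneg cos_dist_frontier_incenter_lt_1
    by (auto simp: k0_def sph_incenter_def)
  then have "0 < e0" by (simp add: e0_def power_less_one_iff)
  note sgn_v = cos_dist_frontier_sgn_le[OF ball[folded k0_def, folded e0_def] this]
  have "0 < norm v" using ball_subset_sph_cone_imp_le_norm ball \<open>0 < e0\<close> by (fastforce simp: e0_def k0_def)
  then have "e0 < e0 / norm v" using \<open>0 < e0\<close> \<open>\<not> 1 \<le> norm v\<close> by (simp add: field_simps)
  then have "e0\<^sup>2 < (e0 / norm v)\<^sup>2" using \<open>0 < e0\<close> by (intro power_strict_mono) auto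
  then have "1 - (e0 / norm v)\<^sup>2 < k0\<^sup>2" using k0 by (simp add: e0_def power_le_one)
  then have "sqrt (1 - (e0 / norm v)\<^sup>2) < k0"
    using k0 real_sqrt_less_mono[of "1 - (e0 / norm v)\<^sup>2" "k0\<^sup>2"] by simp
  then show False using x0 sgn_v by (auto simp: sph_incenter_def k0_def)
qed

lemma sph_incenter_inner_nonneg:
  assumes x0: "sph_incenter C x0" and "y \<in> C"
  shows "0 \<le> y \<bullet> x0"
proof (rule ccontr)
  assume "\<not> 0 \<le> y \<bullet> x0"
  moreover have "x0 \<in> C" using x0 by (simp add: sph_incenter_def)
  moreover have "y \<in> sph_cone C" using \<open>y \<in> C\<close> sph_cone_unit_iff unit_of_mem by blast
  ultimately obtain v where "ball v (sqrt (1 - (cos_dist_frontier C x0)\<^sup>2)) \<subseteq> sph_cone C"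
    "norm v < 1"
    using convex_cone_ball_shift[OF convex_sph_cone ball_subset_sph_cone] unit_of_mem \<open>y \<in> C\<close>
    by (metis not_le)
  then show False using sph_incenter_no_short_ball[OF x0] by fastforce
qed

lemma sph_incenter_unique:
  assumes x0: "sph_incenter C x0" and x1: "sph_incenter C x1"
  shows "x1 = x0"
proof (rule ccontr)
  assume "x1 \<noteq> x0"
  have "x0 \<in> C" "x1 \<in> C" using x0 x1 by (simp_all add: sph_incenter_def)
  then have units: "norm x0 = 1" "norm x1 = 1" by (simp_all add: unit_of_mem)
  have same: "cos_dist_frontier C x1 = cos_dist_frontier C x0"
    using x0 x1 by (auto simp: sph_incenter_def intro: antisym)
  have "convex (sph_cone C)" using convex_sph_cone by (simp add: convex_cone_def)
  from convex_ball_midpoint[OF this ball_subset_sph_cone[OF \<open>x0 \<in> C\<close>]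
      ball_subset_sph_cone[OF \<open>x1 \<in> C\<close>, unfolded same]]
  have "ball (midpoint x0 x1) (sqrt (1 - (cos_dist_frontier C x0)\<^sup>2)) \<subseteq> sph_cone C" .
  moreover have "x0 \<bullet> x1 \<noteq> 1" using unit_eq_of_inner_eq_1[OF units(2,1)] \<open>x1 \<noteq> x0\<close> by auto
  then have "x0 \<bullet> x1 < 1" using abs_inner_unit_le_1[OF units] by (simp add: inner_commute)
  moreover have "(norm (midpoint x0 x1))\<^sup>2 = (1 + x0 \<bullet> x1) / 2"
    using norm_unit_comb_sq[OF units, of "1/2" "1/2"]
    by (simp add: midpoint_def scaleR_add_right power2_eq_square field_simps)
  ultimately have "(norm (midpoint x0 x1))\<^sup>2 < 1" by simp
  then have "norm (midpoint x0 x1) < 1" by (simp add: abs_square_less_1)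
  then show False using sph_incenter_no_short_ball[OF x0 \<open>ball (midpoint x0 x1) _ \<subseteq> _\<close>] by simp
qed

end

theorem corollary2p7:
  fixes C :: "'a::euclidean_space set"
  assumes "DIM('a) \<ge> 2"
    and "C \<subseteq> sphere 0 1" and "C \<noteq> sphere 0 1"
    and "closedin sph_top C"
    and "sph_convex C"
    and "sph_top interior_of C \<noteq> {}"
  shows "\<exists>x0\<in>C.
           sph_setdist x0 (sph_top frontier_of C) = (SUP x\<in>C. sph_setdist x (sph_top frontier_of C))
         \<and> (\<forall>x1\<in>C. sph_setdist x1 (sph_top frontier_of C) = (SUP x\<in>C. sph_setdist x (sph_top frontier_of C))
                   \<longrightarrow> x1 = x0)
         \<and> (\<forall>y\<in>C. sph_dist y x0 \<le> pi / 2)"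
proof -
  interpret sph_convex_body C using assms by unfold_locales
  let ?F = "sph_top frontier_of C"
  obtain x0 where x0: "sph_incenter C x0" using sph_incenter_exists by blast
  then have "x0 \<in> C" and max: "\<forall>x\<in>C. sph_setdist x ?F \<le> sph_setdist x0 ?F"
    by (simp_all add: sph_incenter_iff_max_sph_setdist)
  then have sup: "(SUP x\<in>C. sph_setdist x ?F) = sph_setdist x0 ?F"
    by (intro cSup_eq_maximum) auto
  have "x1 = x0" if "x1 \<in> C" "sph_setdist x1 ?F = sph_setdist x0 ?F" for x1
    using that max sph_incenter_unique[OF x0] by (simp add: sph_incenter_iff_max_sph_setdist)
  moreover have "sph_dist y x0 \<le> pi / 2" if "y \<in> C" for y
    using sph_incenter_inner_nonneg[OF x0 that]
      abs_inner_unit_le_1[OF unit_of_mem[OF \<open>x0 \<in> C\<close>] unit_of_mem[OF that]]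
      arccos_le_pi2[of "x0 \<bullet> y"]
    by (simp add: sph_dist_def inner_commute)
  ultimately show ?thesis using \<open>x0 \<in> C\<close> sup by auto
qed

end
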